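(* Let $\mathfrak{n}\in A_+$ and $\gamma=\begin{pmatrix}a&b\\c&d\end{pmatrix}\in\mathrm{GL}_2(A)$. (1) Let $\ell=\max(\deg c,\deg d)$, and put $\epsilon=1$ if $\deg c\ge\deg d$ and $\epsilon=0$ otherwise. Then there exist $u\in K_\infty$ and $\gamma_0\in\Gamma_0(\mathfrak{n})$ such that $\gamma_0\gamma e_0=e_g$ with $g=\begin{pmatrix}\pi_\infty^{2\ell+\epsilon}&u\\0&1\end{pmatrix}\begin{pmatrix}0&1\\\pi_\infty&0\end{pmatrix}^{\epsilon}$. (2) Let $x,y\in A$ with $\gcd(x,y)=1=\gcd(\mathfrak{n},cx+dy)$, let $\delta=\max(\deg x,\deg y)$, and put $\epsilon=0$ if $\deg x>\deg y$ and $\epsilon=1$ otherwise. Then there exist $u\in K_\infty$ and $\gamma_0\in\Gamma_0(\mathfrak{n})$ such that $\gamma_0\gamma e_0=e_g$ with $g=w_\mathfrak{n}\begin{pmatrix}\pi_\infty^{\deg\mathfrak{n}+2\delta+\epsilon}&u\\0&1\end{pmatrix}\begin{pmatrix}0&1\\\pi_\infty&0\end{pmatrix}^{\epsilon}$, where $w_\mathfrak{n}=\begin{pmatrix}0&-1\\\mathfrak{n}&0\end{pmatrix}$.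
   Context: $\mathbb{F}_q$ a finite field, $A=\mathbb{F}_q[\theta]$, $A_+$ the monic polynomials, $\deg0=-\infty$; $\pi_\infty=\theta^{-1}$, $K_\infty=\mathbb{F}_q((\pi_\infty))$, $O_\infty=\mathbb{F}_q[[\pi_\infty]]$, $\mathcal{I}_\infty$ the Iwahori subgroup of matrices in $\mathrm{GL}_2(O_\infty)$ with lower-left entry in $\pi_\infty O_\infty$. The oriented edges of the Bruhat–Tits tree are the cosets $\mathrm{GL}_2(K_\infty)/K_\infty^\times\mathcal{I}_\infty$; $e_g$ denotes the edge (coset) of $g\in\mathrm{GL}_2(K_\infty)$, $\mathrm{GL}_2(K_\infty)$ acts by left multiplication, and $e_0=e_I$ for the identity matrix $I$. $\Gamma_0(\mathfrak{n})=\{\begin{pmatrix}a&b\\c&d\end{pmatrix}\in\mathrm{GL}_2(A):\mathfrak{n}\mid c\}$. *)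

theory Defs
  imports "HOL-Computational_Algebra.Computational_Algebra"
          "HOL-Computational_Algebra.Formal_Laurent_Series"
          "HOL-Library.Extended_Real"
begin

text \<open>2x2 matrices (a, b, c, d) standing for the matrix with rows (a b) and (c d).\<close>
type_synonym 'k mat2 = "'k \<times> 'k \<times> 'k \<times> 'k"

definition mmul :: "'k::comm_ring_1 mat2 \<Rightarrow> 'k mat2 \<Rightarrow> 'k mat2" where
  "mmul M N = (case M of (a, b, c, d) \<Rightarrow> case N of (a', b', c', d') \<Rightarrow>
     (a*a' + b*c', a*b' + b*d', c*a' + d*c', c*b' + d*d'))"

definition mdet :: "'k::comm_ring_1 mat2 \<Rightarrow> 'k" where
  "mdet M = (case M of (a, b, c, d) \<Rightarrow> a*d - b*c)"

definition mscale :: "'k::comm_ring_1 \<Rightarrow> 'k mat2 \<Rightarrow> 'k mat2" where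
  "mscale z M = (case M of (a, b, c, d) \<Rightarrow> (z*a, z*b, z*c, z*d))"

definition mId :: "'k::comm_ring_1 mat2" where
  "mId = (1, 0, 0, 1)"

fun mpow :: "'k::comm_ring_1 mat2 \<Rightarrow> nat \<Rightarrow> 'k mat2" where
  "mpow M 0 = mId"
| "mpow M (Suc n) = mmul M (mpow M n)"

definition mmap :: "('k \<Rightarrow> 'l) \<Rightarrow> 'k mat2 \<Rightarrow> 'l mat2" where
  "mmap f M = (case M of (a, b, c, d) \<Rightarrow> (f a, f b, f c, f d))"

definition pdeg :: "'a::zero poly \<Rightarrow> ereal" where
  "pdeg p = (if p = 0 then -\<infinity> else ereal (real (degree p)))"

text \<open>GL_2(A) and Gamma_0(n), A = F_q[theta] represented as 'a poly.\<close>
definition GL2A :: "'a::field poly mat2 set" where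
  "GL2A = {M. is_unit (mdet M)}"

definition Gamma0 :: "'a::field poly \<Rightarrow> 'a poly mat2 set" where
  "Gamma0 n = {M \<in> GL2A. case M of (a, b, c, d) \<Rightarrow> n dvd c}"

text \<open>K_infinity = F_q((pi)), pi = 1/theta, represented as 'a fls with fls_X = pi.\<close>
abbreviation piinf :: "'a::field fls" where
  "piinf \<equiv> fls_X"

definition embA :: "'a::field poly \<Rightarrow> 'a fls" where
  "embA p = poly (map_poly fls_const p) fls_X_inv"

definition Oinf :: "'a::field fls set" where
  "Oinf = {f. f = 0 \<or> fls_subdegree f \<ge> 0}"

definition Iwahori :: "'a::field fls mat2 set" where
  "Iwahori = {M. case M of (a, b, c, d) \<Rightarrow>
      a \<in> Oinf \<and> b \<in> Oinf \<and> d \<in> Oinf \<and> c \<in> (\<lambda>x. piinf * x) ` Oinf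
      \<and> mdet M \<noteq> 0 \<and> inverse (mdet M) \<in> Oinf}"

text \<open>The oriented edge e_g = g K_infinity^* I_infinity, as a coset (set of matrices).\<close>
definition edge :: "'a::field fls mat2 \<Rightarrow> 'a fls mat2 set" where
  "edge g = {mmul g (mmul (mscale z mId) k) | z k. z \<noteq> 0 \<and> k \<in> Iwahori}"

definition e0 :: "'a::field fls mat2 set" where
  "e0 = edge mId"

definition act :: "'a::field fls mat2 \<Rightarrow> 'a fls mat2 set \<Rightarrow> 'a fls mat2 set" where
  "act h E = mmul h ` E"

definition actA :: "'a::field poly mat2 \<Rightarrow> 'a fls mat2 set \<Rightarrow> 'a fls mat2 set" where
  "actA h E = act (mmap embA h) E"

end

theory Submission
  imports Defs
begin

unbundle fps_syntax

text \<open>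
  An edge \<open>e\<^sub>M\<close> is unchanged when \<open>M\<close> is multiplied on the right by a scalar
  \<open>z \<noteq> 0\<close> and an Iwahori matrix, so it suffices to factor \<open>M = (A, B; C, D)\<close>
  accordingly. If \<open>v(D) < v(C)\<close>, then
  \<open>M = D (\<pi>\<^sup>k, B/D; 0, 1)(e, 0; C/D, 1)\<close> with \<open>e = det M / (D\<^sup>2 \<pi>\<^sup>k)\<close>, a unit
  for \<open>k = v(det M) - 2 v(D)\<close>; otherwise
  \<open>M = (C/\<pi>) (\<pi>\<^sup>k, A/C; 0, 1)(0, 1; \<pi>, 0)(1, D/C; 0, f)\<close> with
  \<open>f = -\<pi> det M / (C\<^sup>2 \<pi>\<^sup>k)\<close>, a unit for \<open>k = v(det M) - 2 v(C) + 1\<close>.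
  A nonzero polynomial has valuation minus its degree and \<open>det \<gamma>\<close> is a nonzero
  constant, so this gives part (1) with \<open>\<gamma>\<^sub>0 = 1\<close>. For part (2), the two
  coprimality conditions and Bezout give \<open>\<gamma>\<^sub>0 \<in> \<Gamma>\<^sub>0(n)\<close> such that \<open>\<gamma>\<^sub>0 \<gamma>\<close> has
  first row \<open>(y, -x)\<close>. Then \<open>\<gamma>\<^sub>0 \<gamma> = w\<^sub>n N\<close> with \<open>N\<close> having bottom row \<open>(-y, x)\<close>
  and \<open>v(det N) = deg n\<close>, and the factorisation of \<open>N\<close> gives the claim.
\<close>

lemma embA_pCons: "embA (pCons a p) = fls_const a + fls_X_inv * (embA p :: 'a::field fls)"
  unfolding embA_def by (simp add: map_poly_pCons)

lemma embA_0 [simp]: "embA 0 = 0"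
  by (simp add: embA_def)

lemma embA_nth: "(embA p :: 'a::field fls) $$ j = (if j \<le> 0 then coeff p (nat (- j)) else 0)"
proof (induction p arbitrary: j)
  case 0
  then show ?case by simp
next
  case (pCons a p)
  show ?case
    by (auto simp: embA_pCons fls_X_inv_times_conv_shift pCons.IH coeff_pCons split: nat.splits)
       (auto simp: nat_eq_iff)
qed

lemma embA_add [simp]: "embA (p + q) = (embA p + embA q :: 'a::field fls)"
  by (rule fls_eqI) (simp add: embA_nth)

lemma embA_uminus [simp]: "embA (- p) = (- embA p :: 'a::field fls)"
  by (rule fls_eqI) (simp add: embA_nth)

lemma embA_diff [simp]: "embA (p - q) = (embA p - embA q :: 'a::field fls)"
  by (rule fls_eqI) (simp add: embA_nth)

lemma embA_smult: "embA (smult a p) = (fls_const a * embA p :: 'a::field fls)"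
  by (rule fls_eqI) (simp add: embA_nth)

lemma embA_1 [simp]: "embA 1 = (1 :: 'a::field fls)"
  by (simp add: one_pCons embA_pCons)

lemma embA_mult [simp]: "embA (p * q) = (embA p * embA q :: 'a::field fls)"
proof (induction p)
  case 0
  then show ?case by simp
next
  case (pCons a p)
  have "pCons a p * q = smult a q + pCons 0 (p * q)"
    by (simp add: mult_pCons_left)
  then show ?case
    by (simp add: embA_smult embA_pCons pCons.IH algebra_simps)
qed

lemma fls_subdegree_embA:
  assumes "p \<noteq> 0"
  shows "fls_subdegree (embA p :: 'a::field fls) = - int (degree p)"
proof (rule fls_subdegree_eqI)
  show "(embA p :: 'a fls) $$ (- int (degree p)) \<noteq> 0"
    using assms by (simp add: embA_nth)
next
  fix k :: int
  assume "k < - int (degree p)"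
  then show "(embA p :: 'a fls) $$ k = 0"
    by (auto simp: embA_nth intro!: coeff_eq_0)
qed

lemma embA_eq_0_iff [simp]: "(embA p :: 'a::field fls) = 0 \<longleftrightarrow> p = 0"
proof
  assume "embA p = (0 :: 'a fls)"
  then have "coeff p j = 0" for j
    using embA_nth[of p "- int j"] by simp
  then show "p = 0"
    by (simp add: poly_eq_iff)
qed simp

lemma fls_subdegree_embA_unit:
  assumes "is_unit p"
  shows "fls_subdegree (embA p :: 'a::field fls) = 0"
  using assms fls_subdegree_embA[of p] is_unit_iff_degree[of p] by fastforce

lemma pdeg_uminus [simp]: "pdeg (- p) = pdeg (p :: 'a::ab_group_add poly)"
  by (simp add: pdeg_def)

lemma Oinf_iff: "f \<in> Oinf \<longleftrightarrow> fls_subdegree f \<ge> 0"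
  by (auto simp: Oinf_def)

lemma Oinf_add: "f \<in> Oinf \<Longrightarrow> g \<in> Oinf \<Longrightarrow> f + g \<in> Oinf"
  unfolding Oinf_iff by (cases "f + g = 0") (auto dest!: fls_plus_subdegree)

lemma Oinf_uminus: "f \<in> Oinf \<Longrightarrow> - f \<in> Oinf"
  unfolding Oinf_iff by simp

lemma Oinf_diff: "f \<in> Oinf \<Longrightarrow> g \<in> Oinf \<Longrightarrow> f - g \<in> Oinf"
  using Oinf_add[of f "- g"] Oinf_uminus[of g] by simp

lemma Oinf_mult: "f \<in> Oinf \<Longrightarrow> g \<in> Oinf \<Longrightarrow> f * g \<in> Oinf"
  unfolding Oinf_iff by (rule fls_mult_subdegree_ge_0)

lemma fls_X_mem_Oinf [simp]: "fls_X \<in> Oinf"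
  by (simp add: Oinf_iff)

lemma mem_X_times_Oinf_iff:
  "c \<in> (\<lambda>x. fls_X * x) ` Oinf \<longleftrightarrow> c = 0 \<or> fls_subdegree (c :: 'a::field fls) \<ge> 1"
proof
  assume "c \<in> (\<lambda>x. fls_X * x) ` Oinf"
  then obtain x where "x \<in> Oinf" "c = fls_X * x"
    by auto
  then show "c = 0 \<or> fls_subdegree c \<ge> 1"
    by (cases "x = 0") (auto simp: Oinf_iff)
next
  assume c: "c = 0 \<or> fls_subdegree c \<ge> 1"
  have "c = fls_X * (c / fls_X)"
    by (simp add: fls_X_times_conv_shift)
  moreover have "c / fls_X \<in> Oinf"
    using c by (cases "c = 0") (auto simp: Oinf_iff fls_divide_subdegree)
  ultimately show "c \<in> (\<lambda>x. fls_X * x) ` Oinf"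
    by blast
qed

lemma divide_mem_Oinf:
  fixes C D :: "'a::field fls"
  assumes "C \<noteq> 0" "D = 0 \<or> fls_subdegree C \<le> fls_subdegree D"
  shows "D / C \<in> Oinf"
  using assms by (cases "D = 0") (auto simp: Oinf_iff fls_divide_subdegree)

lemma divide_mem_X_times_Oinf:
  fixes C D :: "'a::field fls"
  assumes "D \<noteq> 0" "C = 0 \<or> fls_subdegree D < fls_subdegree C"
  shows "C / D \<in> (\<lambda>x. fls_X * x) ` Oinf"
  using assms by (cases "C = 0") (auto simp: mem_X_times_Oinf_iff fls_divide_subdegree)

lemma mmul_assoc: "mmul (mmul L M) N = mmul L (mmul M (N :: 'k::comm_ring_1 mat2))"
  by (cases L; cases M; cases N) (simp add: mmul_def algebra_simps)

lemma mmul_mId_right [simp]: "mmul M mId = (M :: 'k::comm_ring_1 mat2)"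
  by (cases M) (simp add: mmul_def mId_def)

lemma mmul_mId_left [simp]: "mmul mId M = (M :: 'k::comm_ring_1 mat2)"
  by (cases M) (simp add: mmul_def mId_def)

lemma mmul_mscale_left: "mmul (mscale z M) N = mscale z (mmul M (N :: 'k::comm_ring_1 mat2))"
  by (cases M; cases N) (simp add: mmul_def mscale_def algebra_simps)

lemma mmul_mscale_right: "mmul M (mscale z N) = mscale z (mmul M (N :: 'k::comm_ring_1 mat2))"
  by (cases M; cases N) (simp add: mmul_def mscale_def algebra_simps)

lemma mscale_mscale: "mscale z (mscale w M) = mscale (z * w) (M :: 'k::comm_ring_1 mat2)"
  by (cases M) (simp add: mscale_def algebra_simps)

lemma mscale_1 [simp]: "mscale 1 M = (M :: 'k::comm_ring_1 mat2)"
  by (cases M) (simp add: mscale_def)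

lemma mpow_1 [simp]: "mpow M 1 = (M :: 'k::comm_ring_1 mat2)"
  by (simp add: One_nat_def)

lemma mdet_mmul: "mdet (mmul M N) = mdet M * mdet (N :: 'k::comm_ring_1 mat2)"
  by (cases M; cases N) (simp add: mmul_def mdet_def algebra_simps)

definition minv :: "'a::field mat2 \<Rightarrow> 'a mat2" where
  "minv M = (case M of (a, b, c, d) \<Rightarrow> mscale (inverse (mdet M)) (d, - b, - c, a))"

lemma mmul_minv:
  assumes "mdet M \<noteq> 0"
  shows "mmul M (minv M) = (mId :: 'a::field mat2)"
proof -
  have "mmul M (minv M) = (mdet M * inverse (mdet M), 0, 0, mdet M * inverse (mdet M))"
    by (cases M) (simp add: minv_def mmul_def mscale_def mdet_def algebra_simps)
  then show ?thesis
    using assms by (simp add: mId_def)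
qed

lemma mdet_minv: "mdet (minv M) = inverse (mdet (M :: 'a::field mat2))"
proof -
  have "mdet (minv M) = inverse (mdet M) * inverse (mdet M) * mdet M"
    by (cases M) (simp add: minv_def mscale_def mdet_def algebra_simps)
  then show ?thesis
    by (cases "mdet M = 0") simp_all
qed

lemma Iwahori_mmul:
  fixes k k' :: "'a::field fls mat2"
  assumes "k \<in> Iwahori" "k' \<in> Iwahori"
  shows "mmul k k' \<in> Iwahori"
proof -
  obtain a b c d a' b' c' d' where k: "k = (a, b, c, d)" and k': "k' = (a', b', c', d')"
    by (cases k; cases k')
  from assms obtain x x' where x: "x \<in> Oinf" "c = fls_X * x" and x': "x' \<in> Oinf" "c' = fls_X * x'"
    by (auto simp: Iwahori_def k k')
  have O: "a \<in> Oinf" "b \<in> Oinf" "d \<in> Oinf" "a' \<in> Oinf" "b' \<in> Oinf" "d' \<in> Oinf"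
    "inverse (mdet k) \<in> Oinf" "inverse (mdet k') \<in> Oinf" "mdet k \<noteq> 0" "mdet k' \<noteq> 0"
    using assms by (auto simp: Iwahori_def k k')
  have "c \<in> Oinf" "c' \<in> Oinf"
    using x x' by (simp_all add: Oinf_mult)
  moreover have "c * a' + d * c' = fls_X * (x * a' + d * x')" "x * a' + d * x' \<in> Oinf"
    using O x x' by (auto simp: algebra_simps intro: Oinf_add Oinf_mult)
  ultimately show ?thesis
    using O mdet_mmul[of k k'] unfolding Iwahori_def
    by (auto simp: k k' mmul_def intro!: Oinf_add Oinf_mult)
qed

lemma Iwahori_minv:
  fixes k :: "'a::field fls mat2"
  assumes "k \<in> Iwahori"
  shows "minv k \<in> Iwahori"
proof -
  obtain a b c d where k: "k = (a, b, c, d)"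
    by (cases k)
  from assms obtain x where x: "x \<in> Oinf" "c = fls_X * x"
    by (auto simp: Iwahori_def k)
  have O: "a \<in> Oinf" "b \<in> Oinf" "d \<in> Oinf" "inverse (mdet k) \<in> Oinf" "mdet k \<noteq> 0"
    using assms by (auto simp: Iwahori_def k)
  have "c \<in> Oinf"
    using x by (simp add: Oinf_mult)
  then have "mdet k \<in> Oinf"
    using O unfolding k mdet_def by (auto intro: Oinf_diff Oinf_mult)
  moreover have "inverse (mdet k) * - c \<in> (\<lambda>x. fls_X * x) ` Oinf"
    using x O by (intro image_eqI[of _ _ "inverse (mdet k) * - x"]) (auto intro: Oinf_mult Oinf_uminus)
  ultimately show ?thesis
    using O mdet_minv[of k] unfolding Iwahori_def
    by (auto simp: minv_def k mscale_def intro!: Oinf_mult Oinf_uminus)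
qed

lemma edge_eq_mscale: "edge g = {mscale z (mmul g k) | z k. z \<noteq> 0 \<and> k \<in> Iwahori}"
  unfolding edge_def
  by (metis (no_types, lifting) mmul_mId_left mmul_mscale_left mmul_mscale_right)

lemma edge_mscale_mmul_subset:
  fixes g :: "'a::field fls mat2"
  assumes "z \<noteq> 0" "k \<in> Iwahori"
  shows "edge (mscale z (mmul g k)) \<subseteq> edge g"
proof
  fix e
  assume "e \<in> edge (mscale z (mmul g k))"
  then obtain z' k' where e: "e = mscale z' (mmul (mscale z (mmul g k)) k')" "z' \<noteq> 0" "k' \<in> Iwahori"
    by (auto simp: edge_eq_mscale)
  then have "e = mscale (z' * z) (mmul g (mmul k k'))"
    by (simp add: mmul_mscale_left mmul_assoc mscale_mscale)
  then show "e \<in> edge g"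
    using assms e Iwahori_mmul unfolding edge_eq_mscale by fastforce
qed

lemma edge_mscale_mmul:
  fixes g :: "'a::field fls mat2"
  assumes z: "z \<noteq> 0" and k: "k \<in> Iwahori"
  shows "edge (mscale z (mmul g k)) = edge g"
proof
  have "mdet k \<noteq> 0"
    using k by (cases k) (auto simp: Iwahori_def)
  then have g: "mscale (inverse z) (mmul (mscale z (mmul g k)) (minv k)) = g"
    using z by (simp add: mmul_mscale_left mmul_assoc mmul_minv mscale_mscale)
  have "inverse z \<noteq> 0"
    using z by simp
  from edge_mscale_mmul_subset[OF this Iwahori_minv[OF k], of "mscale z (mmul g k)"]
  show "edge g \<subseteq> edge (mscale z (mmul g k))"
    unfolding g .
qed (use assms edge_mscale_mmul_subset in blast)

lemma mmul_image_edge: "mmul h ` edge g = edge (mmul h (g :: 'a::field fls mat2))"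
proof -
  have "mmul h ` edge g = {mmul h (mscale z (mmul g k)) | z k. z \<noteq> 0 \<and> k \<in> Iwahori}"
    unfolding edge_eq_mscale by blast
  then show ?thesis
    by (simp add: edge_eq_mscale mmul_mscale_right mmul_assoc)
qed

lemma upper_triangular_factorization:
  fixes A B C D p :: "'k::field"
  assumes "D \<noteq> 0" "p \<noteq> 0"
  shows "(A, B, C, D) = mscale D (mmul (p, B / D, 0, 1) (mdet (A, B, C, D) / (D * D * p), 0, C / D, 1))"
  using assms by (simp add: mdet_def mmul_def mscale_def field_simps)

lemma edge_upper_triangular_form:
  fixes A B C D :: "'a::field fls"
  assumes D: "D \<noteq> 0" and det: "mdet (A, B, C, D) \<noteq> 0"
    and CD: "C = 0 \<or> fls_subdegree D < fls_subdegree C"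
    and k: "int k = fls_subdegree (mdet (A, B, C, D)) - 2 * fls_subdegree D"
  shows "edge (A, B, C, D) = edge (fls_X ^ k, B / D, 0, 1)"
proof -
  define e where "e = mdet (A, B, C, D) / (D * D * fls_X ^ k)"
  have "e \<noteq> 0" "fls_subdegree e = 0"
    using D det k by (simp_all add: e_def fls_divide_subdegree)
  then have "(e, 0, C / D, 1) \<in> Iwahori"
    using divide_mem_X_times_Oinf[OF D CD] by (simp add: Iwahori_def mdet_def Oinf_iff)
  moreover have "(A, B, C, D) = mscale D (mmul (fls_X ^ k, B / D, 0, 1) (e, 0, C / D, 1))"
    unfolding e_def using D by (intro upper_triangular_factorization) simp_all
  ultimately show ?thesis
    using D edge_mscale_mmul by metis
qed

lemma flipped_upper_triangular_factorization:
  fixes A B C D p \<pi> :: "'k::field"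
  assumes "C \<noteq> 0" "\<pi> \<noteq> 0" "p \<noteq> 0"
  shows "(A, B, C, D) = mscale (C / \<pi>)
           (mmul (mmul (p, A / C, 0, 1) (0, 1, \<pi>, 0)) (1, D / C, 0, - (\<pi> * mdet (A, B, C, D)) / (C * C * p)))"
  using assms by (simp add: mdet_def mmul_def mscale_def field_simps)

lemma edge_flipped_upper_triangular_form:
  fixes A B C D :: "'a::field fls"
  assumes C: "C \<noteq> 0" and det: "mdet (A, B, C, D) \<noteq> 0"
    and CD: "D = 0 \<or> fls_subdegree C \<le> fls_subdegree D"
    and k: "int k = fls_subdegree (mdet (A, B, C, D)) - 2 * fls_subdegree C + 1"
  shows "edge (A, B, C, D) = edge (mmul (fls_X ^ k, A / C, 0, 1) (0, 1, fls_X, 0))"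
proof -
  define f where "f = - (fls_X * mdet (A, B, C, D)) / (C * C * fls_X ^ k)"
  have "f \<noteq> 0" "fls_subdegree f = 0"
    using C det k by (simp_all add: f_def fls_divide_subdegree)
  then have "(1, D / C, 0, f) \<in> Iwahori"
    using divide_mem_Oinf[OF C CD] by (auto simp: Iwahori_def mdet_def Oinf_iff mem_X_times_Oinf_iff)
  moreover have "(A, B, C, D) =
      mscale (C / fls_X) (mmul (mmul (fls_X ^ k, A / C, 0, 1) (0, 1, fls_X, 0)) (1, D / C, 0, f))"
    unfolding f_def using C by (intro flipped_upper_triangular_factorization) simp_all
  moreover have "C / fls_X \<noteq> 0"
    using C by (metis divide_eq_0_iff fls_X_nonzero)
  ultimately show ?thesis
    using edge_mscale_mmul by metis
qed

lemma mmap_embA_mmul: "mmap embA (mmul M N) = mmul (mmap embA M) (mmap embA N :: 'a::field fls mat2)"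
  by (cases M; cases N) (simp add: mmap_def mmul_def)

lemma mdet_mmap_embA: "mdet (mmap embA M) = (embA (mdet M) :: 'a::field fls)"
  by (cases M) (simp add: mmap_def mdet_def)

lemma actA_e0: "actA \<gamma> e0 = edge (mmap embA \<gamma> :: 'a::field fls mat2)"
  unfolding actA_def act_def e0_def by (simp add: mmul_image_edge)

lemma actA_actA: "actA \<gamma> (actA \<delta> E) = actA (mmul \<gamma> \<delta>) (E :: 'a::field fls mat2 set)"
  unfolding actA_def act_def by (simp add: image_image mmap_embA_mmul mmul_assoc)

lemma actA_mId [simp]: "actA mId E = (E :: 'a::field fls mat2 set)"
proof -
  have "mmap embA mId = (mId :: 'a fls mat2)"
    by (simp add: mmap_def mId_def)
  then have "mmul (mmap embA mId) = (id :: 'a fls mat2 \<Rightarrow> _)"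
    by auto
  then show ?thesis
    by (simp add: actA_def act_def)
qed

lemma edge_embA_bottom_row_form:
  fixes p q :: "'a::field poly" and A B :: "'a fls"
  assumes det: "mdet (A, B, embA p, embA q) \<noteq> 0"
    and s: "fls_subdegree (mdet (A, B, embA p, embA q)) = int s"
    and \<epsilon>: "\<epsilon> = (if pdeg q \<le> pdeg p then 1 else 0)"
  shows "\<exists>u. edge (A, B, embA p, embA q) =
    edge (mmul (fls_X ^ (s + 2 * max (degree p) (degree q) + \<epsilon>), u, 0, 1) (mpow (0, 1, fls_X, 0) \<epsilon>))"
proof (cases "pdeg q \<le> pdeg p")
  case True
  then have p: "p \<noteq> 0" and q: "q = 0 \<or> degree q \<le> degree p"
    using det by (auto simp: pdeg_def mdet_def split: if_splits)
  have "embA q = 0 \<or> fls_subdegree (embA p) \<le> fls_subdegree (embA q)"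
    using p q by (cases "q = 0") (auto simp: fls_subdegree_embA)
  then have "edge (A, B, embA p, embA q) =
      edge (mmul (fls_X ^ (s + 2 * degree p + 1), A / embA p, 0, 1) (0, 1, fls_X, 0))"
    using p det s by (intro edge_flipped_upper_triangular_form) (auto simp: fls_subdegree_embA)
  then show ?thesis
    using True q \<epsilon> by (auto simp: max_def)
next
  case False
  then have q: "q \<noteq> 0" and p: "p = 0 \<or> degree p < degree q"
    by (auto simp: pdeg_def split: if_splits)
  have "embA p = 0 \<or> fls_subdegree (embA q) < fls_subdegree (embA p)"
    using p q by (cases "p = 0") (auto simp: fls_subdegree_embA)
  then have "edge (A, B, embA p, embA q) = edge (fls_X ^ (s + 2 * degree q), B / embA q, 0, 1)"
    using q det s by (intro edge_upper_triangular_form) (auto simp: fls_subdegree_embA)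
  then show ?thesis
    using False p \<epsilon> by (auto simp: max_def)
qed

lemma actA_e0_GL2A_form:
  fixes a b c d :: "'a::field poly"
  assumes \<gamma>: "(a, b, c, d) \<in> GL2A" and \<epsilon>: "\<epsilon> = (if pdeg d \<le> pdeg c then 1 else 0)"
  shows "\<exists>u. actA (a, b, c, d) e0 =
    edge (mmul (fls_X ^ (2 * max (degree c) (degree d) + \<epsilon>), u, 0, 1) (mpow (0, 1, fls_X, 0) \<epsilon>))"
proof -
  have "is_unit (mdet (a, b, c, d))"
    using \<gamma> by (simp add: GL2A_def)
  then have "mdet (embA a, embA b, embA c, embA d) \<noteq> (0 :: 'a fls)"
    "fls_subdegree (mdet (embA a, embA b, embA c, embA d) :: 'a fls) = int 0"
    using mdet_mmap_embA[of "(a, b, c, d)"] fls_subdegree_embA_unit by (auto simp: mmap_def)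
  from edge_embA_bottom_row_form[OF this \<epsilon>] show ?thesis
    by (simp add: actA_e0 mmap_def)
qed

lemma Gamma0_mmul_first_row:
  fixes n a b c d x y :: "'a::field_gcd poly"
  assumes \<gamma>: "(a, b, c, d) \<in> GL2A" and xy: "coprime x y" and n: "coprime n (c * x + d * y)"
  shows "\<exists>\<gamma>0 \<in> Gamma0 n. \<exists>R S. mmul \<gamma>0 (a, b, c, d) = (y, - x, R, S)"
proof -
  obtain v where v: "1 = mdet (a, b, c, d) * v"
    using \<gamma> unfolding GL2A_def by (auto elim: dvdE)
  then have "is_unit v"
    by (metis dvd_triv_right)
  \<comment> \<open>\<open>(r1, r2)\<close> is the row \<open>(y, -x)\<close> times the inverse of \<open>(a, b; c, d)\<close>\<close>
  define r1 where "r1 = v * (c * x + d * y)"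
  define r2 where "r2 = - (v * (a * x + b * y))"
  have row: "r1 * a + r2 * c = y" "r1 * b + r2 * d = - x"
  proof -
    have "r1 * a + r2 * c = mdet (a, b, c, d) * v * y" "r1 * b + r2 * d = - (mdet (a, b, c, d) * v * x)"
      by (simp_all add: r1_def r2_def mdet_def algebra_simps)
    then show "r1 * a + r2 * c = y" "r1 * b + r2 * d = - x"
      using v by simp_all
  qed
  have "coprime r1 r2"
  proof (rule coprimeI)
    fix h
    assume "h dvd r1" "h dvd r2"
    then have "h dvd r1 * a + r2 * c" "h dvd r1 * b + r2 * d"
      by simp_all
    then have "h dvd y" "h dvd x"
      unfolding row by simp_all
    then show "is_unit h"
      using xy coprime_common_divisor by blast
  qed
  moreover have "coprime r1 n"
    using n \<open>is_unit v\<close> by (simp add: r1_def coprime_commute[of n] is_unit_left_imp_coprime)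
  ultimately have "gcd r1 (n * r2) = 1"
    by simp
  then obtain s t where st: "s * r1 + t * (n * r2) = 1"
    by (metis bezout_coefficients_fst_snd)
  have "(r1, r2, - (n * t), s) \<in> Gamma0 n"
    using st by (simp add: Gamma0_def GL2A_def mdet_def algebra_simps)
  moreover have "mmul (r1, r2, - (n * t), s) (a, b, c, d) = (y, - x, - (n * t) * a + s * c, - (n * t) * b + s * d)"
    using row by (simp add: mmul_def)
  ultimately show ?thesis
    by blast
qed

lemma edge_eq_w_image:
  fixes P Q R S e :: "'a::field fls"
  assumes "e \<noteq> 0"
  shows "edge (P, Q, R, S) = mmul (0, - 1, e, 0) ` edge (R / e, S / e, - P, - Q)"
proof -
  have "mmul (0, - 1, e, 0) (R / e, S / e, - P, - Q) = (P, Q, R, S)"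
    using assms by (simp add: mmul_def)
  then show ?thesis
    by (simp add: mmul_image_edge)
qed

lemma actA_Gamma0_e0_Atkin_Lehner_form:
  fixes n a b c d x y :: "'a::field_gcd poly"
  assumes n: "n \<noteq> 0" and \<gamma>: "(a, b, c, d) \<in> GL2A"
    and xy: "coprime x y" and nxy: "coprime n (c * x + d * y)"
    and \<epsilon>: "\<epsilon> = (if pdeg y < pdeg x then 0 else 1)"
  shows "\<exists>u. \<exists>\<gamma>0 \<in> Gamma0 n. actA \<gamma>0 (actA (a, b, c, d) e0) =
    edge (mmul (0, - 1, embA n, 0)
      (mmul (fls_X ^ (degree n + 2 * max (degree x) (degree y) + \<epsilon>), u, 0, 1) (mpow (0, 1, fls_X, 0) \<epsilon>)))"
proof -
  obtain \<gamma>0 R S where \<gamma>0: "\<gamma>0 \<in> Gamma0 n" and row: "mmul \<gamma>0 (a, b, c, d) = (y, - x, R, S)"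
    using Gamma0_mmul_first_row[OF \<gamma> xy nxy] by blast
  define N :: "'a fls mat2" where "N = (embA R / embA n, embA S / embA n, embA (- y), embA x)"
  have "actA \<gamma>0 (actA (a, b, c, d) e0) = edge (embA y, - embA x, embA R, embA S)"
    unfolding actA_actA by (simp add: actA_e0 row mmap_def)
  also have "\<dots> = mmul (0, - 1, embA n, 0) ` edge N"
    using n edge_eq_w_image[of "embA n" "embA y" "- embA x" "embA R" "embA S"] by (simp add: N_def)
  finally have act: "actA \<gamma>0 (actA (a, b, c, d) e0) = mmul (0, - 1, embA n, 0) ` edge N" .
  have "is_unit (mdet (mmul \<gamma>0 (a, b, c, d)))"
    using \<gamma>0 \<gamma> by (simp add: mdet_mmul Gamma0_def GL2A_def is_unit_mult_iff)
  then have unit: "is_unit (mdet (y, - x, R, S))"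
    unfolding row .
  then have "embA (mdet (y, - x, R, S)) \<noteq> (0 :: 'a fls)" "embA n \<noteq> (0 :: 'a fls)"
    using n by auto
  moreover have "mdet N = embA (mdet (y, - x, R, S)) / embA n"
    by (simp add: N_def mdet_def diff_divide_distrib add_divide_distrib algebra_simps)
  ultimately have "mdet N \<noteq> 0" "fls_subdegree (mdet N) = int (degree n)"
    using fls_subdegree_embA_unit[OF unit] fls_subdegree_embA[OF n] by (simp_all add: fls_divide_subdegree)
  moreover have "\<epsilon> = (if pdeg x \<le> pdeg (- y) then 1 else 0)"
    using \<epsilon> by auto
  ultimately obtain u where
    "edge N = edge (mmul (fls_X ^ (degree n + 2 * max (degree x) (degree y) + \<epsilon>), u, 0, 1)
                      (mpow (0, 1, fls_X, 0) \<epsilon>))"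
    using edge_embA_bottom_row_form[of "embA R / embA n" "embA S / embA n" "- y" x "degree n" \<epsilon>]
    by (auto simp: N_def max.commute)
  then show ?thesis
    using act \<gamma>0 by (auto simp: mmul_image_edge)
qed

theorem lemma2p4:
  fixes n a b c d :: "'a::{field_gcd,finite} poly"
  assumes n_monic: "lead_coeff n = 1"
    and gamma: "(a, b, c, d) \<in> GL2A"
  shows
   "(let l = max (degree c) (degree d);
         \<epsilon> = (if pdeg c \<ge> pdeg d then 1 else 0 :: nat)
     in \<exists>u :: 'a fls. \<exists>\<gamma>0 \<in> Gamma0 n.
          actA \<gamma>0 (actA (a, b, c, d) e0) =
          edge (mmul (piinf ^ (2 * l + \<epsilon>), u, 0, 1) (mpow (0, 1, piinf, 0) \<epsilon>)))
    \<and>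
    (\<forall>x y :: 'a poly. gcd x y = 1 \<longrightarrow> gcd n (c * x + d * y) = 1 \<longrightarrow>
       (let \<delta> = max (degree x) (degree y);
            \<epsilon> = (if pdeg x > pdeg y then 0 else 1 :: nat);
            w = (0, -1, embA n, 0) :: 'a fls mat2
        in \<exists>u :: 'a fls. \<exists>\<gamma>0 \<in> Gamma0 n.
          actA \<gamma>0 (actA (a, b, c, d) e0) =
          edge (mmul w (mmul (piinf ^ (degree n + 2 * \<delta> + \<epsilon>), u, 0, 1)
                              (mpow (0, 1, piinf, 0) \<epsilon>)))))"
  unfolding Let_def
proof (intro conjI allI impI, goal_cases)
  case 1
  have "mId \<in> Gamma0 n"
    by (simp add: Gamma0_def GL2A_def mId_def mdet_def)
  then show ?case
    using actA_e0_GL2A_form[OF gamma refl] by (metis actA_mId)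
next
  case (2 x y)
  moreover have "n \<noteq> 0"
    using n_monic by auto
  ultimately show ?case
    using actA_Gamma0_e0_Atkin_Lehner_form[OF _ gamma _ _ refl] by (simp add: coprime_iff_gcd_eq_1)
qed

end
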